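(* Let $K,G,\eta,\bar\eta,\xi,c_0>0$ and let $H:\mathbb R_+\to\mathbb R_+$ be nondecreasing, strongly semismooth, with $H(0)=0$. Let $f(\boldsymbol\sigma,\kappa)=\hat f(p(\boldsymbol\sigma),\varrho(\boldsymbol\sigma),\kappa)=\sqrt{\tfrac12}\varrho(\boldsymbol\sigma)+\eta p(\boldsymbol\sigma)-\xi(c_0+\kappa)$. Let $\boldsymbol\sigma^{tr}\in\mathbb R^{3\times3}_{sym}$, $\bar\varepsilon^{p,tr}\ge0$ be given, $p^{tr}=p(\boldsymbol\sigma^{tr})$, $\varrho^{tr}=\varrho(\boldsymbol\sigma^{tr})$, and define for $\gamma\ge0$ $$q_{tr}(\gamma)=\sqrt{\tfrac12}\big(\varrho^{tr}-\gamma G\sqrt2\big)^++\eta(p^{tr}-\gamma K\bar\eta)-\xi\big(c_0+H(\bar\varepsilon^{p,tr}+\gamma\xi)\big).$$ Assume $f(\boldsymbol\sigma^{tr},H(\bar\varepsilon^{p,tr}))>0$. Then there exists a unique $\triangle\lambda>0$ with $q_{tr}(\triangle\lambda)=0$. Furthermore, each of the following problems has a unique solution: (R) find $(p,\varrho,\bar\varepsilon^p,\triangle\lambda)$ with $p=p^{tr}-\triangle\lambda K\bar\eta$, $\varrho=(\varrho^{tr}-\triangle\lambda G\sqrt2)^+$, $\bar\varepsilon^p=\bar\varepsilon^{p,tr}+\triangle\lambda\xi$, $\hat f(p,\varrho,H(\bar\varepsilon^p))=0$; (P) find $(\boldsymbol\sigma,\bar\varepsilon^p,\triangle\lambda)$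 with $\boldsymbol\sigma=\boldsymbol\sigma^{tr}-\triangle\lambda(G\sqrt2\hat{\mathbf n}+K\bar\eta\mathbf I)$ for some $\hat{\mathbf n}\in\partial\varrho(\boldsymbol\sigma)$, $\bar\varepsilon^p=\bar\varepsilon^{p,tr}+\triangle\lambda\xi$, $f(\boldsymbol\sigma,H(\bar\varepsilon^p))=0$; (Q) find $(\boldsymbol\sigma,\bar\varepsilon^p,\triangle\lambda)$ with the same two equations as in (P) and $\triangle\lambda\ge0$, $f(\boldsymbol\sigma,H(\bar\varepsilon^p))\le0$, $\triangle\lambda f(\boldsymbol\sigma,H(\bar\varepsilon^p))=0$. In addition, if $q_{tr}(\varrho^{tr}/(G\sqrt2))<0$ then $\triangle\lambda\in(0,\varrho^{tr}/(G\sqrt2))$ and $\varrho>0$; conversely, if $q_{tr}(\varrho^{tr}/(G\sqrt2))\ge0$ then $\triangle\lambda\ge\varrho^{tr}/(G\sqrt2)$ and $\varrho=0$ (where $\varrho$ is the corresponding component of the solution of (R)).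
   Context: $\mathbb R^{3\times3}_{sym}$: real symmetric $3\times3$ matrices with Frobenius product ":" and norm; $\mathbf I$ identity; $p(\boldsymbol\sigma)=\frac13\mathbf I:\boldsymbol\sigma$, $\mathbf s(\boldsymbol\sigma)=\boldsymbol\sigma-p(\boldsymbol\sigma)\mathbf I$, $\varrho(\boldsymbol\sigma)=\|\mathbf s(\boldsymbol\sigma)\|$; $(x)^+=\max\{0,x\}$. $\partial\varrho(\boldsymbol\sigma)=\{\mathbf s(\boldsymbol\sigma)/\varrho(\boldsymbol\sigma)\}$ if $\varrho(\boldsymbol\sigma)>0$, and $\{\hat{\mathbf n}\in\mathbb R^{3\times3}_{sym}:\mathbf I:\hat{\mathbf n}=0,\|\hat{\mathbf n}\|\le1\}$ if $\varrho(\boldsymbol\sigma)=0$. Strong semismoothness: local Lipschitz continuity, directional differentiability, and $F(x+h)-F(x)-Vh=O(\|h\|^2)$ for all $V\in\partial F(x+h)$ (Clarke generalized Jacobian) as $h\to0$. *)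

theory Defs
  imports "HOL-Analysis.Analysis"
begin

type_synonym mat3 = "real^3^3"

definition Sym3 :: "mat3 set" where
  "Sym3 = {A. transpose A = A}"

definition frob :: "mat3 \<Rightarrow> mat3 \<Rightarrow> real" (infixl ":::" 70) where
  "frob A B = (\<Sum>i\<in>UNIV. \<Sum>j\<in>UNIV. A $ i $ j * B $ i $ j)"

definition fnorm :: "mat3 \<Rightarrow> real" where
  "fnorm A = sqrt (frob A A)"

definition Id3 :: mat3 where "Id3 = mat 1"

definition pres :: "mat3 \<Rightarrow> real" where
  "pres \<sigma> = (1/3) * frob Id3 \<sigma>"

definition dev :: "mat3 \<Rightarrow> mat3" where
  "dev \<sigma> = \<sigma> - pres \<sigma> *\<^sub>R Id3"

definition rho :: "mat3 \<Rightarrow> real" where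
  "rho \<sigma> = fnorm (dev \<sigma>)"

definition pos :: "real \<Rightarrow> real" where
  "pos x = max 0 x"

definition subdiff_rho :: "mat3 \<Rightarrow> mat3 set" where
  "subdiff_rho \<sigma> = (if rho \<sigma> > 0 then {(1 / rho \<sigma>) *\<^sub>R dev \<sigma>}
     else {n \<in> Sym3. frob Id3 n = 0 \<and> fnorm n \<le> 1})"

definition fhat :: "real \<Rightarrow> real \<Rightarrow> real \<Rightarrow> real \<Rightarrow> real \<Rightarrow> real \<Rightarrow> real" where
  "fhat eta xi c0 p r \<kappa> = sqrt (1/2) * r + eta * p - xi * (c0 + \<kappa>)"

definition yieldf :: "real \<Rightarrow> real \<Rightarrow> real \<Rightarrow> mat3 \<Rightarrow> real \<Rightarrow> real" where
  "yieldf eta xi c0 \<sigma> \<kappa> = fhat eta xi c0 (pres \<sigma>) (rho \<sigma>) \<kappa>"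

definition q_tr :: "real \<Rightarrow> real \<Rightarrow> real \<Rightarrow> real \<Rightarrow> real \<Rightarrow> real \<Rightarrow> (real \<Rightarrow> real)
    \<Rightarrow> mat3 \<Rightarrow> real \<Rightarrow> real \<Rightarrow> real" where
  "q_tr K G eta etab xi c0 H \<sigma>tr etr \<gamma> =
     sqrt (1/2) * pos (rho \<sigma>tr - \<gamma> * G * sqrt 2) + eta * (pres \<sigma>tr - \<gamma> * K * etab)
     - xi * (c0 + H (etr + \<gamma> * xi))"

definition clarke_jac :: "(real \<Rightarrow> real) \<Rightarrow> real \<Rightarrow> real set" where
  "clarke_jac H x = convex hull {d. \<exists>xs ds. (\<forall>k. xs k > 0 \<and> (H has_real_derivative ds k) (at (xs k)))
        \<and> xs \<longlonglongrightarrow> x \<and> ds \<longlonglongrightarrow> d}"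

definition strongly_semismooth :: "(real \<Rightarrow> real) \<Rightarrow> bool" where
  "strongly_semismooth H \<longleftrightarrow>
     (\<forall>x\<ge>0. \<exists>\<delta>>0. \<exists>L. \<forall>y z. y \<ge> 0 \<and> z \<ge> 0 \<and> \<bar>y - x\<bar> < \<delta> \<and> \<bar>z - x\<bar> < \<delta>
          \<longrightarrow> \<bar>H y - H z\<bar> \<le> L * \<bar>y - z\<bar>)
   \<and> (\<forall>x\<ge>0. \<forall>d. (x > 0 \<or> d \<ge> 0) \<longrightarrow>
          (\<exists>l. ((\<lambda>t. (H (x + t * d) - H x) / t) \<longlongrightarrow> l) (at_right 0)))
   \<and> (\<forall>x\<ge>0. \<exists>C \<delta>. \<delta> > 0 \<and> (\<forall>h V. x + h \<ge> 0 \<and> \<bar>h\<bar> < \<delta> \<and> V \<in> clarke_jac H (x + h)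
          \<longrightarrow> \<bar>H (x + h) - H x - V * h\<bar> \<le> C * h\<^sup>2))"

end

(*
  Any stress satisfying the return equation with n in the subdifferential of rho is the
  radial return of the trial stress: its pressure is p_tr - dl K etab and its deviatoric norm
  is (rho_tr - dl G sqrt 2)^+.  Hence the yield function at the returned state equals
  q_tr(dl), and all three problems (R), (P), (Q) reduce to finding a root of q_tr.  The scalar
  function q_tr is continuous, strictly decreasing (each of its three terms is monotone and
  the pressure term strictly so), positive at 0 because the trial state is plastic, and
  eventually negative; so it has exactly one root.  In (Q) the multiplier 0 is excluded by
  q_tr(0) > 0, and the position of the root relative to rho_tr / (G sqrt 2) is read off from
  the sign of q_tr there.
*)
theory Submission
  imports Defs
begin

lemma frob_eq_inner: "frob A B = inner A B"
  unfolding frob_def inner_vec_def by (simp add: inner_real_def)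

lemma fnorm_eq_norm: "fnorm A = norm A"
  unfolding fnorm_def frob_eq_inner norm_eq_sqrt_inner ..

lemma rho_eq_norm_dev: "rho A = norm (dev A)"
  unfolding rho_def fnorm_eq_norm ..

lemma inner_Id3_Id3: "inner Id3 Id3 = 3"
proof -
  have "inner Id3 Id3 = (\<Sum>i\<in>(UNIV::3 set). \<Sum>j\<in>(UNIV::3 set). if i = j then 1 else 0)"
    unfolding Id3_def inner_vec_def by (intro sum.cong refl) (simp add: mat_def inner_real_def)
  then show ?thesis by simp
qed

lemma inner_Id3_dev: "inner Id3 (dev A) = 0"
  unfolding dev_def pres_def frob_eq_inner by (simp add: inner_diff_right inner_Id3_Id3)

lemma dev_plus_pres: "dev A + pres A *\<^sub>R Id3 = A"
  unfolding dev_def by simp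

lemma pres_traceless_plus_Id3:
  assumes "inner Id3 D = 0" shows "pres (D + d *\<^sub>R Id3) = d"
  unfolding pres_def frob_eq_inner using assms by (simp add: inner_add_right inner_Id3_Id3)

lemma dev_traceless_plus_Id3:
  assumes "inner Id3 D = 0" shows "dev (D + d *\<^sub>R Id3) = D"
  unfolding dev_def using assms by (simp add: pres_traceless_plus_Id3)

lemma subspace_Sym3: "subspace Sym3"
  unfolding subspace_def Sym3_def by (auto simp: transpose_def vec_eq_iff)

lemma Id3_in_Sym3: "Id3 \<in> Sym3"
  unfolding Sym3_def Id3_def by simp

lemma dev_in_Sym3: "A \<in> Sym3 \<Longrightarrow> dev A \<in> Sym3"
  unfolding dev_def by (intro subspace_diff subspace_scale subspace_Sym3 Id3_in_Sym3)

lemma inner_Id3_subdiff_rho: "n \<in> subdiff_rho \<sigma> \<Longrightarrow> inner Id3 n = 0"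
  unfolding subdiff_rho_def by (auto split: if_splits simp: inner_Id3_dev frob_eq_inner)

text \<open>When rho A = 0 the division yields 0, which is harmless since then dev A = 0.\<close>
definition return_map :: "mat3 \<Rightarrow> real \<Rightarrow> real \<Rightarrow> real \<Rightarrow> mat3" where
  "return_map A s k dl = (pos (rho A - dl * s) / rho A) *\<^sub>R dev A + (pres A - dl * k) *\<^sub>R Id3"

lemma return_equation_imp_return_map:
  assumes s: "s > 0" and dl: "dl \<ge> 0" and n: "n \<in> subdiff_rho \<sigma>"
    and eq: "\<sigma> = A - dl *\<^sub>R (s *\<^sub>R n + k *\<^sub>R Id3)"
  shows "pres \<sigma> = pres A - dl * k" "rho \<sigma> = pos (rho A - dl * s)" "\<sigma> = return_map A s k dl"
proof -
  show p: "pres \<sigma> = pres A - dl * k"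
    unfolding eq pres_def frob_eq_inner using inner_Id3_subdiff_rho[OF n]
    by (simp add: inner_diff_right inner_add_right inner_Id3_Id3 algebra_simps)
  have "dev \<sigma> = \<sigma> - (pres A - dl * k) *\<^sub>R Id3"
    by (simp add: dev_def p)
  then have d: "dev A = dev \<sigma> + (dl * s) *\<^sub>R n"
    by (simp add: eq dev_def algebra_simps)
  have "rho \<sigma> = pos (rho A - dl * s) \<and> \<sigma> = return_map A s k dl"
  proof (cases "rho \<sigma> > 0")
    case True
    define r where "r = rho \<sigma>"
    have r0: "r > 0" and nr: "norm (dev \<sigma>) = r"
      using True by (simp_all add: r_def rho_eq_norm_dev)
    have "n = (1 / r) *\<^sub>R dev \<sigma>" using n True unfolding subdiff_rho_def r_def by simp
    moreover have "(r + dl * s) / r = 1 + dl * s / r"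
      using r0 by (simp add: field_simps)
    ultimately have dA: "dev A = ((r + dl * s) / r) *\<^sub>R dev \<sigma>"
      using d by (simp add: scaleR_add_left)
    have rA: "rho A = r + dl * s"
      using r0 nr s dl by (simp add: rho_eq_norm_dev dA)
    moreover have "r + dl * s > 0"
      using r0 s dl by (simp add: add_pos_nonneg)
    ultimately have "dev \<sigma> = (r / rho A) *\<^sub>R dev A"
      using r0 by (simp add: dA)
    then show ?thesis
      using rA r0 dev_plus_pres[of \<sigma>] p by (simp add: return_map_def pos_def r_def)
  next
    case False
    then have "dev \<sigma> = 0" by (simp add: rho_eq_norm_dev)
    moreover have "norm n \<le> 1"
      using n False unfolding subdiff_rho_def by (simp add: fnorm_eq_norm rho_eq_norm_dev)
    ultimately have "rho A \<le> dl * s"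
      using d s dl by (simp add: rho_eq_norm_dev mult_left_le)
    then show ?thesis
      using False \<open>dev \<sigma> = 0\<close> dev_plus_pres[of \<sigma>] p
      by (simp add: return_map_def pos_def rho_eq_norm_dev)
  qed
  then show "rho \<sigma> = pos (rho A - dl * s)" "\<sigma> = return_map A s k dl"
    by blast+
qed

lemma return_map_solves_return_equation:
  assumes s: "s > 0" and dl: "dl > 0" and A: "A \<in> Sym3"
  shows "return_map A s k dl \<in> Sym3"
    "\<exists>n\<in>subdiff_rho (return_map A s k dl).
       return_map A s k dl = A - dl *\<^sub>R (s *\<^sub>R n + k *\<^sub>R Id3)"
proof -
  define c where "c = pos (rho A - dl * s) / rho A"
  have ret: "return_map A s k dl = c *\<^sub>R dev A + (pres A - dl * k) *\<^sub>R Id3"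
    by (simp add: return_map_def c_def)
  show "return_map A s k dl \<in> Sym3"
    unfolding ret by (intro subspace_add subspace_scale subspace_Sym3 dev_in_Sym3 A Id3_in_Sym3)
  have dev_ret: "dev (return_map A s k dl) = c *\<^sub>R dev A"
    unfolding ret by (simp add: dev_traceless_plus_Id3 inner_Id3_dev)
  show "\<exists>n\<in>subdiff_rho (return_map A s k dl).
       return_map A s k dl = A - dl *\<^sub>R (s *\<^sub>R n + k *\<^sub>R Id3)"
  proof (cases "rho A > dl * s")
    case True
    moreover have "dl * s > 0" using s dl by simp
    ultimately have rA: "rho A > 0" by linarith
    have "rho (return_map A s k dl) = rho A - dl * s"
      using True rA by (simp add: rho_eq_norm_dev dev_ret c_def pos_def)
    then have "subdiff_rho (return_map A s k dl) = {(1 / rho A) *\<^sub>R dev A}"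
      using True rA by (simp add: subdiff_rho_def dev_ret c_def pos_def)
    moreover have "return_map A s k dl = A - dl *\<^sub>R (s *\<^sub>R ((1 / rho A) *\<^sub>R dev A) + k *\<^sub>R Id3)"
      using True rA dev_plus_pres[of A] unfolding ret c_def pos_def
      by (simp add: algebra_simps diff_divide_distrib)
    ultimately show ?thesis by blast
  next
    case False
    define n where "n = (1 / (dl * s)) *\<^sub>R dev A"
    have "rho (return_map A s k dl) = 0"
      using False by (simp add: rho_eq_norm_dev dev_ret c_def pos_def)
    moreover have "norm n \<le> 1"
      using False s dl by (simp add: n_def rho_eq_norm_dev divide_le_eq_1)
    moreover have "n \<in> Sym3"
      unfolding n_def by (intro subspace_scale subspace_Sym3 dev_in_Sym3 A)
    ultimately have "n \<in> subdiff_rho (return_map A s k dl)"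
      by (simp add: subdiff_rho_def fnorm_eq_norm frob_eq_inner n_def inner_Id3_dev)
    moreover have "return_map A s k dl = A - dl *\<^sub>R (s *\<^sub>R n + k *\<^sub>R Id3)"
      using False s dl dev_plus_pres[of A] unfolding ret c_def pos_def n_def
      by (simp add: algebra_simps)
    ultimately show ?thesis by blast
  qed
qed

lemma Ex1_case_prod3I:
  assumes "P a b c" and "\<And>x y z. P x y z \<Longrightarrow> x = a \<and> y = b \<and> z = c"
  shows "\<exists>!(x, y, z). P x y z"
proof (rule ex1I[of _ "(a, b, c)"])
  show "case (a, b, c) of (x, y, z) \<Rightarrow> P x y z" using assms(1) by simp
  show "t = (a, b, c)" if "case t of (x, y, z) \<Rightarrow> P x y z" for t
    using that assms(2) by (cases t) simp
qed

lemma Ex1_case_prod4I: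
  assumes "P a b c d" and "\<And>x y z w. P x y z w \<Longrightarrow> x = a \<and> y = b \<and> z = c \<and> w = d"
  shows "\<exists>!(x, y, z, w). P x y z w"
proof (rule ex1I[of _ "(a, b, c, d)"])
  show "case (a, b, c, d) of (x, y, z, w) \<Rightarrow> P x y z w" using assms(1) by simp
  show "t = (a, b, c, d)" if "case t of (x, y, z, w) \<Rightarrow> P x y z w" for t
    using that assms(2) by (cases t) simp
qed

lemma strongly_semismooth_continuous_on:
  assumes "strongly_semismooth H"
  shows "continuous_on {0..} H"
  unfolding continuous_on_iff
proof (intro ballI allI impI)
  fix x e :: real assume x: "x \<in> {0..}" and e: "e > 0"
  have "\<forall>x\<ge>0. \<exists>\<delta>>0. \<exists>L. \<forall>y z. y \<ge> 0 \<and> z \<ge> 0 \<and> \<bar>y - x\<bar> < \<delta> \<and> \<bar>z - x\<bar> < \<delta>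
      \<longrightarrow> \<bar>H y - H z\<bar> \<le> L * \<bar>y - z\<bar>"
    using assms unfolding strongly_semismooth_def by (rule conjunct1)
  then obtain \<delta> L where \<delta>: "\<delta> > 0" and lip: "\<forall>y z. y \<ge> 0 \<and> z \<ge> 0 \<and> \<bar>y - x\<bar> < \<delta> \<and> \<bar>z - x\<bar> < \<delta>
      \<longrightarrow> \<bar>H y - H z\<bar> \<le> L * \<bar>y - z\<bar>"
    using x by auto
  show "\<exists>d>0. \<forall>y\<in>{0..}. dist y x < d \<longrightarrow> dist (H y) (H x) < e"
  proof (intro exI[of _ "min \<delta> (e / (\<bar>L\<bar> + 1))"] conjI ballI impI)
    show "min \<delta> (e / (\<bar>L\<bar> + 1)) > 0" using \<delta> e by simp
    fix y assume y: "y \<in> {0..}" and dy: "dist y x < min \<delta> (e / (\<bar>L\<bar> + 1))"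
    have "\<bar>H y - H x\<bar> \<le> L * \<bar>y - x\<bar>"
      using lip x y dy \<delta> by (simp add: dist_real_def)
    also have "\<dots> \<le> \<bar>L\<bar> * \<bar>y - x\<bar>"
      by (simp add: mult_right_mono)
    also have "\<dots> \<le> \<bar>L\<bar> * (e / (\<bar>L\<bar> + 1))"
      using dy by (intro mult_left_mono) (auto simp: dist_real_def)
    also have "\<dots> < e" using e by (simp add: field_simps)
    finally show "dist (H y) (H x) < e" by (simp add: dist_real_def)
  qed
qed

lemma strict_antimono_ex1_pos_root:
  fixes q :: "real \<Rightarrow> real"
  assumes "continuous_on {0..} q" "strict_antimono_on {0..} q" "q 0 > 0" "0 \<le> T" "q T < 0"
  shows "\<exists>!x. x > 0 \<and> q x = 0"
proof -
  obtain x where x: "0 \<le> x" "q x = 0"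
    using IVT2'[of q T 0 0] assms continuous_on_subset[OF assms(1)] by force
  have inj: "inj_on q {0..}"
    using assms(2) strict_antimono_iff_antimono by blast
  show ?thesis
  proof (rule ex1I[of _ x])
    show "x > 0 \<and> q x = 0"
      using x assms(3) by (cases "x = 0") auto
    show "y = x" if "y > 0 \<and> q y = 0" for y
      using inj_onD[OF inj, of y x] that x by simp
  qed
qed

locale drucker_prager_return =
  fixes K G eta etab xi c0 :: real and H :: "real \<Rightarrow> real" and \<sigma>tr :: mat3 and etr :: real
  assumes consts_pos: "K > 0" "G > 0" "eta > 0" "etab > 0" "xi > 0" "c0 > 0"
    and H_nonneg: "\<forall>x\<ge>0. H x \<ge> 0"
    and H_mono: "mono_on {0..} H"
    and H_cont: "continuous_on {0..} H"
    and sym_tr: "\<sigma>tr \<in> Sym3"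
    and etr_nonneg: "etr \<ge> 0"
    and plastic: "yieldf eta xi c0 \<sigma>tr (H etr) > 0"
begin

abbreviation q :: "real \<Rightarrow> real" where
  "q \<equiv> q_tr K G eta etab xi c0 H \<sigma>tr etr"

lemma q_eq_fhat:
  "q dl = fhat eta xi c0 (pres \<sigma>tr - dl * K * etab) (pos (rho \<sigma>tr - dl * G * sqrt 2)) (H (etr + dl * xi))"
  by (simp add: q_tr_def fhat_def)

lemma q_0_pos: "q 0 > 0"
  using plastic by (simp add: q_tr_def yieldf_def fhat_def pos_def rho_eq_norm_dev)

lemma q_strict_decreasing:
  assumes "0 \<le> a" "a < b" shows "q b < q a"
proof -
  have "a * (G * sqrt 2) \<le> b * (G * sqrt 2)"
    using assms consts_pos by (intro mult_right_mono) auto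
  then have "pos (rho \<sigma>tr - b * G * sqrt 2) \<le> pos (rho \<sigma>tr - a * G * sqrt 2)"
    by (simp add: pos_def mult.assoc)
  then have "sqrt (1/2) * pos (rho \<sigma>tr - b * G * sqrt 2) \<le> sqrt (1/2) * pos (rho \<sigma>tr - a * G * sqrt 2)"
    by (intro mult_left_mono) auto
  moreover have "a * (K * etab) < b * (K * etab)"
    using assms consts_pos by (intro mult_strict_right_mono) auto
  then have "eta * (pres \<sigma>tr - b * K * etab) < eta * (pres \<sigma>tr - a * K * etab)"
    using consts_pos by (simp add: mult.assoc)
  moreover have "H (etr + a * xi) \<le> H (etr + b * xi)"
    using assms consts_pos etr_nonneg by (intro mono_onD[OF H_mono]) auto
  then have "xi * (c0 + H (etr + a * xi)) \<le> xi * (c0 + H (etr + b * xi))"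
    using consts_pos by simp
  ultimately show ?thesis
    unfolding q_tr_def by linarith
qed

lemma q_eventually_neg: "\<exists>T\<ge>0. q T < 0"
proof (intro exI conjI)
  define T where "T = max (rho \<sigma>tr / (G * sqrt 2)) (\<bar>pres \<sigma>tr\<bar> / (K * etab))"
  have "rho \<sigma>tr / (G * sqrt 2) \<le> T" "\<bar>pres \<sigma>tr\<bar> / (K * etab) \<le> T"
    by (simp_all add: T_def)
  then have "rho \<sigma>tr \<le> T * (G * sqrt 2)" "pres \<sigma>tr \<le> T * (K * etab)"
    using consts_pos by (simp_all add: pos_divide_le_eq)
  then have "sqrt (1/2) * pos (rho \<sigma>tr - T * G * sqrt 2) = 0"
    and "eta * (pres \<sigma>tr - T * K * etab) \<le> 0"
    using consts_pos by (simp_all add: pos_def mult.assoc mult_nonneg_nonpos)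
  moreover show "T \<ge> 0"
    unfolding T_def using consts_pos by (simp add: le_max_iff_disj)
  then have "H (etr + T * xi) \<ge> 0"
    using H_nonneg etr_nonneg consts_pos by simp
  then have "xi * (c0 + H (etr + T * xi)) > 0"
    using consts_pos by simp
  ultimately show "q T < 0"
    unfolding q_tr_def by linarith
qed

lemma continuous_on_q: "continuous_on {0..} q"
proof -
  have "continuous_on {0..} (\<lambda>dl. H (etr + dl * xi))"
    using etr_nonneg consts_pos
    by (intro continuous_on_compose2[OF H_cont]) (auto intro!: continuous_intros)
  then show ?thesis
    unfolding q_tr_def pos_def by (intro continuous_intros)
qed

lemma ex1_root: "\<exists>!dl. dl > 0 \<and> q dl = 0"
proof -
  have "strict_antimono_on {0..} q"
    by (intro monotone_onI q_strict_decreasing) auto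
  then show ?thesis
    using strict_antimono_ex1_pos_root continuous_on_q q_0_pos q_eventually_neg by blast
qed

definition dlam :: real where
  "dlam = (THE dl. dl > 0 \<and> q dl = 0)"

lemma dlam_pos: "dlam > 0" and q_dlam: "q dlam = 0"
  using theI'[OF ex1_root] unfolding dlam_def by simp_all

lemma q_eq_0_iff: "0 \<le> dl \<Longrightarrow> q dl = 0 \<longleftrightarrow> dl = dlam"
  using q_strict_decreasing[of dl dlam] q_strict_decreasing[of dlam dl] dlam_pos q_dlam
  by (cases dl dlam rule: linorder_cases) auto

lemma q_neg_iff: "0 \<le> b \<Longrightarrow> q b < 0 \<longleftrightarrow> dlam < b"
  using q_strict_decreasing[of b dlam] q_strict_decreasing[of dlam b] dlam_pos q_dlam
  by (cases b dlam rule: linorder_cases) auto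

lemma yieldf_return_equation:
  assumes "dl \<ge> 0"
    and "\<exists>n\<in>subdiff_rho \<sigma>. \<sigma> = \<sigma>tr - dl *\<^sub>R ((G * sqrt 2) *\<^sub>R n + (K * etab) *\<^sub>R Id3)"
  shows "yieldf eta xi c0 \<sigma> (H (etr + dl * xi)) = q dl"
    "\<sigma> = return_map \<sigma>tr (G * sqrt 2) (K * etab) dl"
proof -
  obtain n where "n \<in> subdiff_rho \<sigma>"
    and "\<sigma> = \<sigma>tr - dl *\<^sub>R ((G * sqrt 2) *\<^sub>R n + (K * etab) *\<^sub>R Id3)"
    using assms(2) by blast
  from return_equation_imp_return_map[OF _ assms(1) this]
  show "yieldf eta xi c0 \<sigma> (H (etr + dl * xi)) = q dl"
    "\<sigma> = return_map \<sigma>tr (G * sqrt 2) (K * etab) dl"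
    using consts_pos by (simp_all add: yieldf_def q_eq_fhat mult.assoc)
qed

lemma return_map_at_dlam:
  defines "\<sigma> \<equiv> return_map \<sigma>tr (G * sqrt 2) (K * etab) dlam"
  shows "\<sigma> \<in> Sym3"
    and "\<exists>n\<in>subdiff_rho \<sigma>. \<sigma> = \<sigma>tr - dlam *\<^sub>R ((G * sqrt 2) *\<^sub>R n + (K * etab) *\<^sub>R Id3)"
    and "yieldf eta xi c0 \<sigma> (H (etr + dlam * xi)) = 0"
proof -
  have "G * sqrt 2 > 0" using consts_pos by simp
  note solves = return_map_solves_return_equation[OF this dlam_pos sym_tr, of "K * etab"]
  show "\<sigma> \<in> Sym3"
    unfolding \<sigma>_def by (rule solves(1))
  show ret: "\<exists>n\<in>subdiff_rho \<sigma>. \<sigma> = \<sigma>tr - dlam *\<^sub>R ((G * sqrt 2) *\<^sub>R n + (K * etab) *\<^sub>R Id3)"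
    unfolding \<sigma>_def by (rule solves(2))
  have "yieldf eta xi c0 \<sigma> (H (etr + dlam * xi)) = q dlam"
    by (rule yieldf_return_equation(1)[OF less_imp_le[OF dlam_pos] ret])
  then show "yieldf eta xi c0 \<sigma> (H (etr + dlam * xi)) = 0"
    by (simp only: q_dlam)
qed

lemma ex1_reduced_problem:
  "\<exists>!(p, r, e, dl). dl \<ge> 0
      \<and> p = pres \<sigma>tr - dl * K * etab
      \<and> r = pos (rho \<sigma>tr - dl * G * sqrt 2)
      \<and> e = etr + dl * xi
      \<and> fhat eta xi c0 p r (H e) = 0"
proof (rule Ex1_case_prod4I[of _ "pres \<sigma>tr - dlam * K * etab" "pos (rho \<sigma>tr - dlam * G * sqrt 2)"
      "etr + dlam * xi" dlam])
  fix p r e dl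
  assume h: "dl \<ge> 0
      \<and> p = pres \<sigma>tr - dl * K * etab
      \<and> r = pos (rho \<sigma>tr - dl * G * sqrt 2)
      \<and> e = etr + dl * xi
      \<and> fhat eta xi c0 p r (H e) = 0"
  then have "q dl = 0"
    by (elim conjE) (simp add: q_eq_fhat)
  then have "dl = dlam"
    using q_eq_0_iff h by simp
  then show "p = pres \<sigma>tr - dlam * K * etab \<and> r = pos (rho \<sigma>tr - dlam * G * sqrt 2)
      \<and> e = etr + dlam * xi \<and> dl = dlam"
    using h by (elim conjE) simp
qed (simp add: q_eq_fhat[symmetric] q_dlam less_imp_le[OF dlam_pos])

lemma ex1_return_problem:
  "\<exists>!(\<sigma>, e, dl). \<sigma> \<in> Sym3 \<and> dl \<ge> 0
      \<and> (\<exists>n\<in>subdiff_rho \<sigma>. \<sigma> = \<sigma>tr - dl *\<^sub>R ((G * sqrt 2) *\<^sub>R n + (K * etab) *\<^sub>R Id3))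
      \<and> e = etr + dl * xi
      \<and> yieldf eta xi c0 \<sigma> (H e) = 0"
proof (rule Ex1_case_prod3I[of _ "return_map \<sigma>tr (G * sqrt 2) (K * etab) dlam" "etr + dlam * xi" dlam])
  fix \<sigma> e dl
  assume h: "\<sigma> \<in> Sym3 \<and> dl \<ge> 0
      \<and> (\<exists>n\<in>subdiff_rho \<sigma>. \<sigma> = \<sigma>tr - dl *\<^sub>R ((G * sqrt 2) *\<^sub>R n + (K * etab) *\<^sub>R Id3))
      \<and> e = etr + dl * xi \<and> yieldf eta xi c0 \<sigma> (H e) = 0"
  from h have dl: "dl \<ge> 0" and e: "e = etr + dl * xi"
    and y: "yieldf eta xi c0 \<sigma> (H (etr + dl * xi)) = 0"
    by auto
  from h have ret: "\<exists>n\<in>subdiff_rho \<sigma>. \<sigma> = \<sigma>tr - dl *\<^sub>R ((G * sqrt 2) *\<^sub>R n + (K * etab) *\<^sub>R Id3)"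
    by (elim conjE)
  have "q dl = 0"
    using yieldf_return_equation(1)[OF dl ret] y by simp
  then have "dl = dlam"
    using q_eq_0_iff[OF dl] by simp
  then show "\<sigma> = return_map \<sigma>tr (G * sqrt 2) (K * etab) dlam \<and> e = etr + dlam * xi \<and> dl = dlam"
    using yieldf_return_equation(2)[OF dl ret] e by simp
qed (use return_map_at_dlam dlam_pos in simp)

lemma ex1_complementarity_problem:
  "\<exists>!(\<sigma>, e, dl). \<sigma> \<in> Sym3
      \<and> (\<exists>n\<in>subdiff_rho \<sigma>. \<sigma> = \<sigma>tr - dl *\<^sub>R ((G * sqrt 2) *\<^sub>R n + (K * etab) *\<^sub>R Id3))
      \<and> e = etr + dl * xi
      \<and> dl \<ge> 0 \<and> yieldf eta xi c0 \<sigma> (H e) \<le> 0 \<and> dl * yieldf eta xi c0 \<sigma> (H e) = 0"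
proof (rule Ex1_case_prod3I[of _ "return_map \<sigma>tr (G * sqrt 2) (K * etab) dlam" "etr + dlam * xi" dlam])
  fix \<sigma> e dl
  assume h: "\<sigma> \<in> Sym3
      \<and> (\<exists>n\<in>subdiff_rho \<sigma>. \<sigma> = \<sigma>tr - dl *\<^sub>R ((G * sqrt 2) *\<^sub>R n + (K * etab) *\<^sub>R Id3))
      \<and> e = etr + dl * xi
      \<and> dl \<ge> 0 \<and> yieldf eta xi c0 \<sigma> (H e) \<le> 0 \<and> dl * yieldf eta xi c0 \<sigma> (H e) = 0"
  from h have dl: "dl \<ge> 0" and e: "e = etr + dl * xi"
    and y: "yieldf eta xi c0 \<sigma> (H (etr + dl * xi)) \<le> 0" "dl * yieldf eta xi c0 \<sigma> (H (etr + dl * xi)) = 0"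
    by auto
  from h have ret: "\<exists>n\<in>subdiff_rho \<sigma>. \<sigma> = \<sigma>tr - dl *\<^sub>R ((G * sqrt 2) *\<^sub>R n + (K * etab) *\<^sub>R Id3)"
    by (elim conjE)
  have "q dl \<le> 0" "dl * q dl = 0"
    using yieldf_return_equation(1)[OF dl ret] y by simp_all
  \<comment> \<open>dl = 0 is excluded because the trial state is plastic: q 0 > 0.\<close>
  then have "q dl = 0"
    using q_0_pos by (cases "dl = 0") auto
  then have "dl = dlam"
    using q_eq_0_iff[OF dl] by simp
  then show "\<sigma> = return_map \<sigma>tr (G * sqrt 2) (K * etab) dlam \<and> e = etr + dlam * xi \<and> dl = dlam"
    using yieldf_return_equation(2)[OF dl ret] e by simp
qed (use return_map_at_dlam dlam_pos in simp)

lemma reduced_problem_regimes: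
  "\<forall>p r e dl. (dl \<ge> 0
      \<and> p = pres \<sigma>tr - dl * K * etab
      \<and> r = pos (rho \<sigma>tr - dl * G * sqrt 2)
      \<and> e = etr + dl * xi
      \<and> fhat eta xi c0 p r (H e) = 0) \<longrightarrow>
    (q (rho \<sigma>tr / (G * sqrt 2)) < 0 \<longrightarrow> 0 < dl \<and> dl < rho \<sigma>tr / (G * sqrt 2) \<and> r > 0)
    \<and> (q (rho \<sigma>tr / (G * sqrt 2)) \<ge> 0 \<longrightarrow> dl \<ge> rho \<sigma>tr / (G * sqrt 2) \<and> r = 0)"
proof (intro allI impI)
  fix p r e dl
  assume h: "dl \<ge> 0
      \<and> p = pres \<sigma>tr - dl * K * etab
      \<and> r = pos (rho \<sigma>tr - dl * G * sqrt 2)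
      \<and> e = etr + dl * xi
      \<and> fhat eta xi c0 p r (H e) = 0"
  then have dl: "dl \<ge> 0" and r: "r = pos (rho \<sigma>tr - dl * G * sqrt 2)" and "q dl = 0"
    by (auto simp: q_eq_fhat)
  define b where "b = rho \<sigma>tr / (G * sqrt 2)"
  have "dl = dlam"
    using q_eq_0_iff[OF dl] \<open>q dl = 0\<close> by simp
  moreover have "0 \<le> b"
    using consts_pos by (simp add: b_def rho_eq_norm_dev)
  moreover have "dl < b \<longleftrightarrow> dl * (G * sqrt 2) < rho \<sigma>tr"
    using consts_pos by (simp add: b_def pos_less_divide_eq)
  then have "r > 0 \<longleftrightarrow> dl < b"
    unfolding r pos_def by (simp add: mult.assoc less_max_iff_disj)
  moreover have "r \<ge> 0"
    unfolding r pos_def by simp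
  ultimately show "(q b < 0 \<longrightarrow> 0 < dl \<and> dl < b \<and> r > 0) \<and> (q b \<ge> 0 \<longrightarrow> dl \<ge> b \<and> r = 0)"
    using q_neg_iff[of b] dlam_pos by (auto simp flip: not_less)
qed

end

theorem theorem3:
  fixes K G eta etab xi c0 :: real
    and H :: "real \<Rightarrow> real"
    and \<sigma>tr :: mat3 and etr :: real
  assumes pos_consts: "K > 0" "G > 0" "eta > 0" "etab > 0" "xi > 0" "c0 > 0"
    and H_nonneg: "\<forall>x\<ge>0. H x \<ge> 0"
    and H_mono: "mono_on {0..} H"
    and H_ssm: "strongly_semismooth H"
    and H0: "H 0 = 0"
    and sym_tr: "\<sigma>tr \<in> Sym3"
    and etr_nonneg: "etr \<ge> 0"
    and plastic: "yieldf eta xi c0 \<sigma>tr (H etr) > 0"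
  shows
    "(\<exists>!dl. dl > 0 \<and> q_tr K G eta etab xi c0 H \<sigma>tr etr dl = 0)
   \<and> (\<exists>!(p, r, e, dl). dl \<ge> 0
          \<and> p = pres \<sigma>tr - dl * K * etab
          \<and> r = pos (rho \<sigma>tr - dl * G * sqrt 2)
          \<and> e = etr + dl * xi
          \<and> fhat eta xi c0 p r (H e) = 0)
   \<and> (\<exists>!(\<sigma>, e, dl). \<sigma> \<in> Sym3 \<and> dl \<ge> 0
          \<and> (\<exists>n\<in>subdiff_rho \<sigma>. \<sigma> = \<sigma>tr - dl *\<^sub>R ((G * sqrt 2) *\<^sub>R n + (K * etab) *\<^sub>R Id3))
          \<and> e = etr + dl * xi
          \<and> yieldf eta xi c0 \<sigma> (H e) = 0)
   \<and> (\<exists>!(\<sigma>, e, dl). \<sigma> \<in> Sym3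
          \<and> (\<exists>n\<in>subdiff_rho \<sigma>. \<sigma> = \<sigma>tr - dl *\<^sub>R ((G * sqrt 2) *\<^sub>R n + (K * etab) *\<^sub>R Id3))
          \<and> e = etr + dl * xi
          \<and> dl \<ge> 0 \<and> yieldf eta xi c0 \<sigma> (H e) \<le> 0 \<and> dl * yieldf eta xi c0 \<sigma> (H e) = 0)
   \<and> (\<forall>p r e dl. (dl \<ge> 0
          \<and> p = pres \<sigma>tr - dl * K * etab
          \<and> r = pos (rho \<sigma>tr - dl * G * sqrt 2)
          \<and> e = etr + dl * xi
          \<and> fhat eta xi c0 p r (H e) = 0) \<longrightarrow>
        (q_tr K G eta etab xi c0 H \<sigma>tr etr (rho \<sigma>tr / (G * sqrt 2)) < 0 \<longrightarrow>
            0 < dl \<and> dl < rho \<sigma>tr / (G * sqrt 2) \<and> r > 0)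
      \<and> (q_tr K G eta etab xi c0 H \<sigma>tr etr (rho \<sigma>tr / (G * sqrt 2)) \<ge> 0 \<longrightarrow>
            dl \<ge> rho \<sigma>tr / (G * sqrt 2) \<and> r = 0))"
proof -
  interpret drucker_prager_return K G eta etab xi c0 H \<sigma>tr etr
    using pos_consts H_nonneg H_mono strongly_semismooth_continuous_on[OF H_ssm]
      sym_tr etr_nonneg plastic
    by unfold_locales
  show ?thesis
    by (intro conjI ex1_root ex1_reduced_problem ex1_return_problem ex1_complementarity_problem
        reduced_problem_regimes)
qed

end
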